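(* For every instance $I$ of the Bilevel Shortest Path problem (on a directed or an undirected graph), $\mathrm{OPT}_{\mathrm{str}}(I)\le\mathrm{OPT}_{\mathrm{weak}}(I)$.
   Context: An instance is $I=(G,E^\ell,E^f,s,t,c,d)$: $G=(V,E)$ a simple directed or undirected graph, $E=E^\ell\cup E^f$ a partition into leader's and follower's edges, $s,t\in V$, $c,d:E\to\mathbb{R}_{\ge0}$; $f(Z)=\sum_{e\in Z}f(e)$. Paths are simple, identified with edge sets; $\mathcal P_{st}$ (the $s$-$t$-paths) is nonempty. $\mathrm{OPT}_{\mathrm{str}}(I)=\min c(X\cup Y)$ over $X\subseteq E^\ell$, $Y\in\arg\min\{d(Y'):Y'\subseteq E^f,\ X\cup Y'\in\mathcal P_{st}\}$. $\mathrm{OPT}_{\mathrm{weak}}(I)$ is the same but with the follower's constraint that $X\cup Y'$ contains some path of $\mathcal P_{st}$. Leader choices making the follower's problem infeasible are infeasible; optimistic setting: among follower-optimal responses the one minimizing the leader's cost is chosen. *)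

theory Defs
  imports Complex_Main
begin

text \<open>Edges are built from ordered vertex pairs by a function mk:
  directed graphs use mk u v = (u,v), undirected graphs use mk u v = {u,v}.
  A (simple) s-t-path is identified with its edge set.\<close>

definition is_path :: "('v \<Rightarrow> 'v \<Rightarrow> 'e) \<Rightarrow> 'e set \<Rightarrow> 'v \<Rightarrow> 'v \<Rightarrow> 'e set \<Rightarrow> bool" where
  "is_path mk E s t P \<longleftrightarrow>
     (\<exists>vs. vs \<noteq> [] \<and> distinct vs \<and> hd vs = s \<and> last vs = t \<and>
        (\<forall>i. Suc i < length vs \<longrightarrow> mk (vs ! i) (vs ! Suc i) \<in> E) \<and>
        P = {mk (vs ! i) (vs ! Suc i) | i. Suc i < length vs})"

definition paths_st :: "('v \<Rightarrow> 'v \<Rightarrow> 'e) \<Rightarrow> 'e set \<Rightarrow> 'v \<Rightarrow> 'v \<Rightarrow> 'e set set" where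
  "paths_st mk E s t = {P. is_path mk E s t P}"

definition follower_opt_str ::
  "('v \<Rightarrow> 'v \<Rightarrow> 'e) \<Rightarrow> 'e set \<Rightarrow> 'e set \<Rightarrow> 'v \<Rightarrow> 'v \<Rightarrow> ('e \<Rightarrow> real) \<Rightarrow> 'e set \<Rightarrow> 'e set \<Rightarrow> bool" where
  "follower_opt_str mk E Ef s t d X Y \<longleftrightarrow>
     Y \<subseteq> Ef \<and> X \<union> Y \<in> paths_st mk E s t \<and>
     (\<forall>Y'. Y' \<subseteq> Ef \<and> X \<union> Y' \<in> paths_st mk E s t \<longrightarrow> sum d Y \<le> sum d Y')"

definition follower_opt_weak ::
  "('v \<Rightarrow> 'v \<Rightarrow> 'e) \<Rightarrow> 'e set \<Rightarrow> 'e set \<Rightarrow> 'v \<Rightarrow> 'v \<Rightarrow> ('e \<Rightarrow> real) \<Rightarrow> 'e set \<Rightarrow> 'e set \<Rightarrow> bool" where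
  "follower_opt_weak mk E Ef s t d X Y \<longleftrightarrow>
     Y \<subseteq> Ef \<and> (\<exists>P \<in> paths_st mk E s t. P \<subseteq> X \<union> Y) \<and>
     (\<forall>Y'. Y' \<subseteq> Ef \<and> (\<exists>P \<in> paths_st mk E s t. P \<subseteq> X \<union> Y') \<longrightarrow> sum d Y \<le> sum d Y')"

definition OPT_str ::
  "('v \<Rightarrow> 'v \<Rightarrow> 'e) \<Rightarrow> 'e set \<Rightarrow> 'e set \<Rightarrow> 'e set \<Rightarrow> 'v \<Rightarrow> 'v \<Rightarrow> ('e \<Rightarrow> real) \<Rightarrow> ('e \<Rightarrow> real) \<Rightarrow> real" where
  "OPT_str mk E El Ef s t c d =
     Min {sum c (X \<union> Y) | X Y. X \<subseteq> El \<and> follower_opt_str mk E Ef s t d X Y}"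

definition OPT_weak ::
  "('v \<Rightarrow> 'v \<Rightarrow> 'e) \<Rightarrow> 'e set \<Rightarrow> 'e set \<Rightarrow> 'e set \<Rightarrow> 'v \<Rightarrow> 'v \<Rightarrow> ('e \<Rightarrow> real) \<Rightarrow> ('e \<Rightarrow> real) \<Rightarrow> real" where
  "OPT_weak mk E El Ef s t c d =
     Min {sum c (X \<union> Y) | X Y. X \<subseteq> El \<and> follower_opt_weak mk E Ef s t d X Y}"

definition bsp_instance ::
  "('v \<Rightarrow> 'v \<Rightarrow> 'e) \<Rightarrow> 'v set \<Rightarrow> 'e set \<Rightarrow> 'e set \<Rightarrow> 'e set \<Rightarrow> 'v \<Rightarrow> 'v \<Rightarrow> ('e \<Rightarrow> real) \<Rightarrow> ('e \<Rightarrow> real) \<Rightarrow> bool" where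
  "bsp_instance mk V E El Ef s t c d \<longleftrightarrow>
     finite V \<and> E \<subseteq> {mk u v | u v. u \<in> V \<and> v \<in> V \<and> u \<noteq> v} \<and>
     s \<in> V \<and> t \<in> V \<and> El \<union> Ef = E \<and> El \<inter> Ef = {} \<and>
     (\<forall>e \<in> E. c e \<ge> 0 \<and> d e \<ge> 0) \<and> paths_st mk E s t \<noteq> {}"

definition dir_edge :: "'v \<Rightarrow> 'v \<Rightarrow> 'v \<times> 'v" where
  "dir_edge u v = (u, v)"

definition undir_edge :: "'v \<Rightarrow> 'v \<Rightarrow> 'v set" where
  "undir_edge u v = {u, v}"

end

theory Submission
  imports Defs
begin

text \<open>Take a leader-optimal pair (X, Y) of the weak model and an s-t-path P inside X \<union> Y.
  Let the leader buy X' = P \<inter> El instead. Every exact completion Z of X' to a path is also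
  admissible for X in the weak model, so d Y \<le> d Z, while d (P \<inter> Ef) \<le> d Y by nonnegativity;
  hence P \<inter> Ef is an optimal strong response to X'. The resulting strong solution is P itself,
  and c P \<le> c (X \<union> Y).\<close>

lemma paths_st_subset: "P \<in> paths_st mk E s t \<Longrightarrow> P \<subseteq> E"
  unfolding paths_st_def is_path_def by auto

lemma bsp_instance_finite_edges:
  assumes "bsp_instance mk V E El Ef s t c d"
  shows "finite E"
proof -
  from assms have "finite V" and E: "E \<subseteq> {mk u v | u v. u \<in> V \<and> v \<in> V \<and> u \<noteq> v}"
    unfolding bsp_instance_def by auto
  have "{mk u v | u v. u \<in> V \<and> v \<in> V \<and> u \<noteq> v} \<subseteq> case_prod mk ` (V \<times> V)"
    by auto
  with \<open>finite V\<close> E show ?thesis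
    by (meson finite_SigmaI finite_imageI finite_subset)
qed

lemma finite_leader_values:
  assumes "finite El" "finite Ef" "\<And>X Y. Q X Y \<Longrightarrow> Y \<subseteq> Ef"
  shows "finite {sum c (X \<union> Y) | X Y. X \<subseteq> El \<and> Q X Y}"
proof (rule finite_subset)
  show "{sum c (X \<union> Y) | X Y. X \<subseteq> El \<and> Q X Y} \<subseteq> (\<lambda>(X, Y). sum c (X \<union> Y)) ` (Pow El \<times> Pow Ef)"
    using assms(3) by fastforce
  show "finite ((\<lambda>(X, Y). sum c (X \<union> Y)) ` (Pow El \<times> Pow Ef))"
    using assms(1,2) by simp
qed

lemma follower_opt_weak_exists:
  assumes "finite Ef" "P \<in> paths_st mk E s t" "P \<subseteq> X \<union> Ef"
  shows "\<exists>Y. follower_opt_weak mk E Ef s t d X Y"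
proof -
  let ?F = "{Y. Y \<subseteq> Ef \<and> (\<exists>P \<in> paths_st mk E s t. P \<subseteq> X \<union> Y)}"
  have "?F \<subseteq> Pow Ef"
    by blast
  then have "finite ?F"
    by (rule finite_subset) (simp add: assms(1))
  moreover have "Ef \<in> ?F"
    using assms(2,3) by blast
  ultimately obtain Y where "is_arg_min (sum d) (\<lambda>Y. Y \<in> ?F) Y"
    using ex_is_arg_min_if_finite[of ?F "sum d"] by blast
  then have "Y \<in> ?F" "\<forall>Y' \<in> ?F. sum d Y \<le> sum d Y'"
    unfolding is_arg_min_linorder by simp_all
  then show ?thesis
    unfolding follower_opt_weak_def by auto
qed

lemma follower_opt_str_on_path:
  assumes weak: "follower_opt_weak mk E Ef s t d X Y"
    and P: "P \<in> paths_st mk E s t" "P \<subseteq> X \<union> Y"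
    and X: "X \<subseteq> El" and disj: "El \<inter> Ef = {}" and "P \<subseteq> El \<union> Ef"
    and "finite Ef" and d_nonneg: "\<forall>e \<in> Ef. d e \<ge> 0"
  shows "follower_opt_str mk E Ef s t d (P \<inter> El) (P \<inter> Ef)"
  unfolding follower_opt_str_def
proof (intro conjI allI impI)
  have Y: "Y \<subseteq> Ef"
    and Y_opt: "\<And>Z. Z \<subseteq> Ef \<Longrightarrow> \<exists>P \<in> paths_st mk E s t. P \<subseteq> X \<union> Z \<Longrightarrow> sum d Y \<le> sum d Z"
    using weak unfolding follower_opt_weak_def by auto
  have "P \<inter> El \<union> P \<inter> Ef = P"
    using \<open>P \<subseteq> El \<union> Ef\<close> by auto
  then show "P \<inter> El \<union> P \<inter> Ef \<in> paths_st mk E s t"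
    using P(1) by simp
  show "P \<inter> Ef \<subseteq> Ef"
    by simp
  fix Z
  assume Z: "Z \<subseteq> Ef \<and> P \<inter> El \<union> Z \<in> paths_st mk E s t"
  have "P \<inter> Ef \<subseteq> Y"
    using P(2) X disj by auto
  then have "sum d (P \<inter> Ef) \<le> sum d Y"
    using Y \<open>finite Ef\<close> d_nonneg by (intro sum_mono2) (auto intro: finite_subset)
  also have "\<dots> \<le> sum d Z"
  proof (rule Y_opt)
    show "Z \<subseteq> Ef"
      using Z by simp
    show "\<exists>P' \<in> paths_st mk E s t. P' \<subseteq> X \<union> Z"
      using Z P(2) Y disj by (intro bexI[of _ "P \<inter> El \<union> Z"]) auto
  qed
  finally show "sum d (P \<inter> Ef) \<le> sum d Z" .
qed

lemma OPT_str_le_leader_cost: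
  assumes "finite El" "finite Ef" "X \<subseteq> El" "follower_opt_str mk E Ef s t d X Y"
  shows "OPT_str mk E El Ef s t c d \<le> sum c (X \<union> Y)"
proof -
  let ?S = "{sum c (X \<union> Y) | X Y. X \<subseteq> El \<and> follower_opt_str mk E Ef s t d X Y}"
  have "finite ?S"
    by (rule finite_leader_values[OF assms(1,2)]) (simp add: follower_opt_str_def)
  moreover have "sum c (X \<union> Y) \<in> ?S"
    using assms(3,4) by blast
  ultimately show ?thesis
    unfolding OPT_str_def by simp
qed

lemma OPT_weak_attained:
  assumes "finite El" "finite Ef" "P \<in> paths_st mk E s t" "P \<subseteq> El \<union> Ef"
  obtains X Y where "X \<subseteq> El" "follower_opt_weak mk E Ef s t d X Y"
    "OPT_weak mk E El Ef s t c d = sum c (X \<union> Y)"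
proof -
  let ?W = "{sum c (X \<union> Y) | X Y. X \<subseteq> El \<and> follower_opt_weak mk E Ef s t d X Y}"
  have "finite ?W"
    by (rule finite_leader_values[OF assms(1,2)]) (simp add: follower_opt_weak_def)
  moreover obtain Y0 where "follower_opt_weak mk E Ef s t d El Y0"
    using follower_opt_weak_exists[OF assms(2-4)] by blast
  then have "?W \<noteq> {}"
    by blast
  ultimately have "Min ?W \<in> ?W"
    by (rule Min_in)
  then show ?thesis
    using that unfolding OPT_weak_def by blast
qed

lemma OPT_str_le_OPT_weak:
  assumes "finite E" and partition: "El \<union> Ef = E" "El \<inter> Ef = {}"
    and nonneg: "\<forall>e \<in> E. c e \<ge> 0 \<and> d e \<ge> 0" and "paths_st mk E s t \<noteq> {}"
  shows "OPT_str mk E El Ef s t c d \<le> OPT_weak mk E El Ef s t c d"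
proof -
  have fin: "finite El" "finite Ef"
    using \<open>finite E\<close> partition by auto
  obtain P0 where P0: "P0 \<in> paths_st mk E s t"
    using \<open>paths_st mk E s t \<noteq> {}\<close> by auto
  moreover have "P0 \<subseteq> El \<union> Ef"
    using paths_st_subset[OF P0] partition(1) by simp
  ultimately obtain X Y where X: "X \<subseteq> El" and weak: "follower_opt_weak mk E Ef s t d X Y"
    and opt: "OPT_weak mk E El Ef s t c d = sum c (X \<union> Y)"
    by (rule OPT_weak_attained[OF fin])
  then have Y: "Y \<subseteq> Ef"
    unfolding follower_opt_weak_def by simp
  from weak obtain P where P: "P \<in> paths_st mk E s t" "P \<subseteq> X \<union> Y"
    unfolding follower_opt_weak_def by blast
  have "P \<subseteq> El \<union> Ef"
    using P(2) X Y by blast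
  have "follower_opt_str mk E Ef s t d (P \<inter> El) (P \<inter> Ef)"
    by (rule follower_opt_str_on_path[OF weak P X partition(2) \<open>P \<subseteq> El \<union> Ef\<close> fin(2)])
      (use nonneg partition(1) in blast)
  then have "OPT_str mk E El Ef s t c d \<le> sum c (P \<inter> El \<union> P \<inter> Ef)"
    by (rule OPT_str_le_leader_cost[OF fin Int_lower2])
  also have "P \<inter> El \<union> P \<inter> Ef = P"
    using \<open>P \<subseteq> El \<union> Ef\<close> by blast
  also have "sum c P \<le> sum c (X \<union> Y)"
  proof (rule sum_mono2)
    show "finite (X \<union> Y)"
      using X Y fin finite_subset[of "X \<union> Y" "El \<union> Ef"] by blast
    show "P \<subseteq> X \<union> Y"
      by (fact P(2))
    show "\<And>e. e \<in> X \<union> Y - P \<Longrightarrow> 0 \<le> c e"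
      using X Y nonneg partition(1) by blast
  qed
  finally show ?thesis
    using opt by simp
qed

lemma bsp_instance_OPT_str_le_OPT_weak:
  "bsp_instance mk V E El Ef s t c d \<Longrightarrow> OPT_str mk E El Ef s t c d \<le> OPT_weak mk E El Ef s t c d"
  by (rule OPT_str_le_OPT_weak[OF bsp_instance_finite_edges]) (auto simp: bsp_instance_def)

theorem corollary3p5:
  shows "(\<forall>(V::'v set) E El Ef s t c d.
            bsp_instance dir_edge V E El Ef s t c d \<longrightarrow>
            OPT_str dir_edge E El Ef s t c d \<le> OPT_weak dir_edge E El Ef s t c d)
       \<and> (\<forall>(V::'v set) E El Ef s t c d.
            bsp_instance undir_edge V E El Ef s t c d \<longrightarrow>
            OPT_str undir_edge E El Ef s t c d \<le> OPT_weak undir_edge E El Ef s t c d)"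
  using bsp_instance_OPT_str_le_OPT_weak[where mk = dir_edge]
    bsp_instance_OPT_str_le_OPT_weak[where mk = undir_edge]
  by blast

end
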